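(* Let $p\ge 7$ be a prime and $k\ge1$ an integer with $p-1\nmid 2k$, and put $t=2k-1$. Then, modulo $p$, \begin{align*} C_k(2,5,6)\,B_{2k} \equiv{}& (3^t + 6^t) S_t(\tfrac{1}{18}, \tfrac{11}{180}) + (3^t + 6^t - 10^t) S_t(\tfrac{11}{180}, \tfrac{1}{15}) - (6^t - 10^t + 12^t) S_t(\tfrac{2}{15}, \tfrac{5}{36})\\ &+ (6^t + 12^t) S_t(\tfrac{7}{36}, \tfrac{1}{5}) - 10^t S_t(\tfrac{47}{180}, \tfrac{4}{15}) - (2^t + 6^t + 12^t) S_t(\tfrac{3}{10}, \tfrac{11}{36}) + 10^t S_t(\tfrac{1}{3}, \tfrac{61}{180})\\ &+ (6^t + 12^t) S_t(\tfrac{13}{36}, \tfrac{11}{30}) - 10^t S_t(\tfrac{83}{180}, \tfrac{7}{15}). \end{align*}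
   Context: $B_n$ denotes the $n$th Bernoulli number, defined by $\frac{z}{e^z-1}=\sum_{n\ge0}B_n\frac{z^n}{n!}$. For a prime $p$, an integer $\ell$ and real numbers $0\le x<y\le 1$, $S_\ell(x,y)=\sum_{xp<s<yp} s^\ell$, the sum over integers $s$ strictly between $xp$ and $yp$. For positive integers $a,b,c$, $C_k(a,b,c)=\frac{a^{p-2k}+b^{p-2k}-c^{p-2k}-1}{4k}$ (a rational number). A congruence $u\equiv v \pmod p$ between rational numbers means that $u-v$ has $p$-adic valuation at least $1$. *)

theory Defs
  imports "HOL-Computational_Algebra.Computational_Algebra" "HOL-Number_Theory.Number_Theory"
begin

definition bernoulli :: "nat \<Rightarrow> rat" where
  "bernoulli n = fact n * fps_nth (fps_X / (fps_exp 1 - 1)) n"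

definition S_sum :: "nat \<Rightarrow> nat \<Rightarrow> rat \<Rightarrow> rat \<Rightarrow> rat" where
  "S_sum p l x y = (\<Sum>s\<in>{s::int. x * of_nat p < of_int s \<and> of_int s < y * of_nat p}. (of_int s) ^ l)"

definition C_coef :: "nat \<Rightarrow> nat \<Rightarrow> nat \<Rightarrow> nat \<Rightarrow> nat \<Rightarrow> rat" where
  "C_coef p k a b c = ((of_nat a) powi (int p - 2 * int k) + (of_nat b) powi (int p - 2 * int k)
      - (of_nat c) powi (int p - 2 * int k) - 1) / (4 * of_nat k)"

(* u \<equiv> v (mod p) for rationals: u - v has p-adic valuation at least 1 *)
definition rat_cong :: "rat \<Rightarrow> rat \<Rightarrow> nat \<Rightarrow> bool" where
  "rat_cong u v p = (let (a, b) = quotient_of (u - v) in int p dvd a \<and> \<not> int p dvd b)"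


end

theory Submission
  imports Defs
begin

(* Write m = 2k and t = m - 1. For a coprime to p, Voronoi's congruence
   (a^m - 1) B_m/m = a^(m-1) sum_{j<N} j^t floor(j a/N)  (mod p),  N = p^E,
   combined with p^E = p (mod a) and the periodicity of power sums modulo p, gives
   (a^(p-m) - a) B_m/m = -T(a)  (mod p)  with  T(a) = sum_{j<p} j^t floor(j a/p).
   Since 2 + 5 - 6 - 1 = 0, this yields  C_k(2,5,6) B_m = -(T(2) + T(5) - T(6))/2.
   Reducing the right-hand side R modulo p in the same way, 2R + T(2) + T(5) - T(6) becomes
   sum_{0<r<p} r^t w(r), where w(r) only depends on floor(180 r/p) and on -r/p modulo 60.
   A finite check shows w(p - r) = w(r), and as t is odd such a sum vanishes modulo p. *)

section \<open>Rationals that are integral at p\<close>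

definition pval_ge :: "nat \<Rightarrow> nat \<Rightarrow> rat \<Rightarrow> bool" where
  "pval_ge p e x \<longleftrightarrow> (\<exists>a b. \<not> int p dvd b \<and> x = of_int (int p ^ e * a) / of_int b)"

context
  fixes p :: nat
  assumes prime: "prime p"
begin

lemma pval_ge_0: "pval_ge p e 0"
  unfolding pval_ge_def
  by (rule exI[of _ 0], rule exI[of _ 1]) (use prime in \<open>auto simp: prime_gt_1_nat\<close>)

lemma pval_ge_of_int: "int p ^ e dvd a \<Longrightarrow> pval_ge p e (of_int a)"
  unfolding pval_ge_def
  by (rule exI[of _ "a div int p ^ e"], rule exI[of _ 1]) (use prime in \<open>auto simp: prime_gt_1_nat\<close>)

lemma pval_ge_0_of_int [simp]: "pval_ge p 0 (of_int a)"
  by (rule pval_ge_of_int) simp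

lemma pval_ge_0_of_nat [simp]: "pval_ge p 0 (of_nat a)"
  using pval_ge_0_of_int[of "int a"] by simp

lemma not_dvd_mult_prime:
  "\<not> int p dvd b \<Longrightarrow> \<not> int p dvd d \<Longrightarrow> \<not> int p dvd (b * d)"
  using prime by (simp add: prime_dvd_mult_iff)

lemma pval_ge_add:
  assumes "pval_ge p e x" "pval_ge p e y"
  shows "pval_ge p e (x + y)"
proof -
  obtain a b where ab: "\<not> int p dvd b" "x = of_int (int p ^ e * a) / of_int b"
    using assms(1) pval_ge_def by auto
  obtain c d where cd: "\<not> int p dvd d" "y = of_int (int p ^ e * c) / of_int d"
    using assms(2) pval_ge_def by auto
  have "b \<noteq> 0" "d \<noteq> 0" using ab cd by auto
  then have "x + y = of_int (int p ^ e * (a * d + c * b)) / of_int (b * d)"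
    using ab cd by (simp add: field_simps)
  then show ?thesis
    unfolding pval_ge_def using not_dvd_mult_prime[OF ab(1) cd(1)] by blast
qed

lemma pval_ge_mult:
  assumes "pval_ge p e x" "pval_ge p f y"
  shows "pval_ge p (e + f) (x * y)"
proof -
  obtain a b where ab: "\<not> int p dvd b" "x = of_int (int p ^ e * a) / of_int b"
    using assms(1) pval_ge_def by auto
  obtain c d where cd: "\<not> int p dvd d" "y = of_int (int p ^ f * c) / of_int d"
    using assms(2) pval_ge_def by auto
  have "x * y = of_int (int p ^ (e + f) * (a * c)) / of_int (b * d)"
    using ab cd by (simp add: field_simps power_add)
  then show ?thesis
    unfolding pval_ge_def using not_dvd_mult_prime[OF ab(1) cd(1)] by blast
qed

lemma pval_ge_mult_right: "pval_ge p e x \<Longrightarrow> pval_ge p 0 y \<Longrightarrow> pval_ge p e (x * y)"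
  using pval_ge_mult[of e x 0 y] by simp

lemma pval_ge_mult_left: "pval_ge p 0 x \<Longrightarrow> pval_ge p e y \<Longrightarrow> pval_ge p e (x * y)"
  using pval_ge_mult[of 0 x e y] by simp

lemma pval_ge_uminus: "pval_ge p e x \<Longrightarrow> pval_ge p e (- x)"
  using pval_ge_mult_right[of e x "-1"] pval_ge_0_of_int[of "-1"] by simp

lemma pval_ge_diff: "pval_ge p e x \<Longrightarrow> pval_ge p e y \<Longrightarrow> pval_ge p e (x - y)"
  using pval_ge_add[of e x "- y"] pval_ge_uminus by simp

lemma pval_ge_sum: "(\<And>i. i \<in> A \<Longrightarrow> pval_ge p e (f i)) \<Longrightarrow> pval_ge p e (sum f A)"
  by (induction A rule: infinite_finite_induct) (auto intro: pval_ge_add pval_ge_0)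

lemma pval_ge_mono:
  assumes "f \<le> e" "pval_ge p e x"
  shows "pval_ge p f x"
proof -
  obtain a b where ab: "\<not> int p dvd b" "x = of_int (int p ^ e * a) / of_int b"
    using assms(2) pval_ge_def by auto
  have "int p ^ e * a = int p ^ f * (int p ^ (e - f) * a)"
    using assms(1) by (simp add: power_add[symmetric])
  then show ?thesis using ab unfolding pval_ge_def by metis
qed

lemma pval_ge_divide_int:
  assumes "pval_ge p e x" "\<not> int p dvd c"
  shows "pval_ge p e (x / of_int c)"
proof -
  obtain a b where ab: "\<not> int p dvd b" "x = of_int (int p ^ e * a) / of_int b"
    using assms(1) pval_ge_def by auto
  then have "x / of_int c = of_int (int p ^ e * a) / of_int (b * c)" by simp
  then show ?thesis
    unfolding pval_ge_def using not_dvd_mult_prime[OF ab(1) assms(2)] by blast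
qed

lemma pval_ge_cancel_int:
  assumes "pval_ge p e (of_int c * x)" "\<not> int p dvd c"
  shows "pval_ge p e x"
  using pval_ge_divide_int[OF assms] assms(2) by (cases "c = 0") auto

lemma pval_ge_divide_prime_power:
  assumes "pval_ge p (e + v) x"
  shows "pval_ge p e (x / of_nat p ^ v)"
proof -
  obtain a b where ab: "\<not> int p dvd b" "x = of_int (int p ^ (e + v) * a) / of_int b"
    using assms pval_ge_def by auto
  have "(of_nat p :: rat) \<noteq> 0" using prime prime_gt_0_nat by auto
  then have "x / of_nat p ^ v = of_int (int p ^ e * a) / of_int b"
    using ab by (simp add: power_add field_simps)
  then show ?thesis unfolding pval_ge_def using ab(1) by blast
qed

lemma pval_ge_divide_nat:
  assumes "m > 0" "pval_ge p (e + multiplicity p m) x"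
  shows "pval_ge p e (x / of_nat m)"
proof -
  obtain u where u: "m = p ^ multiplicity p m * u" "\<not> p dvd u"
    using multiplicity_decompose'[of m p] assms(1) prime by (metis not_prime_unit gr_implies_not0)
  have "x / of_nat m = (x / of_nat p ^ multiplicity p m) / of_int (int u)"
    by (subst u(1)) simp
  moreover have "\<not> int p dvd int u" using u(2) by simp
  ultimately show ?thesis
    using pval_ge_divide_int pval_ge_divide_prime_power assms(2) by metis
qed

lemma pval_ge_power_int:
  assumes "\<not> p dvd a"
  shows "pval_ge p 0 ((of_nat a :: rat) powi e)"
proof (cases "e \<ge> 0")
  case True
  then show ?thesis using pval_ge_0_of_nat[of "a ^ nat e"] by (simp add: power_int_def)
next
  case False
  have "\<not> int p dvd int a ^ nat (- e)"
    using assms prime prime_dvd_power[of "int p" "int a"] by auto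
  then have "pval_ge p 0 (of_int 1 / of_int (int a ^ nat (- e)))"
    by (intro pval_ge_divide_int pval_ge_0_of_int)
  then show ?thesis using False by (simp add: power_int_def power_inverse divide_inverse)
qed

lemma rat_cong_if_pval_ge_1:
  assumes "pval_ge p 1 (u - v)"
  shows "rat_cong u v p"
proof -
  obtain a b where ab: "\<not> int p dvd b" "u - v = of_int (int p * a) / of_int b"
    using assms pval_ge_def by auto
  obtain n d where nd: "quotient_of (u - v) = (n, d)" by (cases "quotient_of (u - v)") auto
  have "d > 0" using nd quotient_of_denom_pos by blast
  moreover have "of_int n / of_int d = (of_int (int p * a) / of_int b :: rat)"
    using nd ab(2) quotient_of_div by metis
  moreover have "b \<noteq> 0" using ab(1) by auto
  ultimately have "of_int (n * b) = (of_int (int p * a * d) :: rat)"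
    by (simp add: field_simps)
  then have "int p dvd n * b" by (metis dvd_triv_left mult.assoc of_int_eq_iff)
  then have pn: "int p dvd n" using ab(1) prime by (simp add: prime_dvd_mult_iff)
  have "\<not> int p dvd d"
  proof
    assume "int p dvd d"
    with pn nd quotient_of_coprime have "is_unit (int p)" by (meson coprime_common_divisor)
    then show False using prime by (simp add: not_prime_unit)
  qed
  then show ?thesis unfolding rat_cong_def using nd pn by simp
qed

end

section \<open>Faulhaber's formula and a weak von Staudt theorem\<close>

lemma bernoulli_egf_times_denominator:
  "fps_X / (fps_exp (1::rat) - 1) * (fps_exp 1 - 1) = fps_X"
proof (rule fps_times_divide_eq)
  have "(fps_exp (1::rat) - 1) $ 1 \<noteq> 0" by simp
  then show "fps_exp (1::rat) - 1 \<noteq> 0" by auto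
  have "subdegree (fps_exp (1::rat) - 1) \<le> 1"
    by (rule subdegree_leI) simp
  then show "subdegree (fps_exp (1::rat) - 1) \<le> subdegree (fps_X :: rat fps)" by simp
qed

lemma sum_fps_exp_times_exp_minus_1:
  "(\<Sum>j<N. fps_exp (of_nat j :: rat)) * (fps_exp 1 - 1) = fps_exp (of_nat N) - 1"
proof (induction N)
  case (Suc N)
  have "(\<Sum>j<Suc N. fps_exp (of_nat j :: rat)) * (fps_exp 1 - 1)
      = fps_exp (of_nat N) - 1 + (fps_exp (of_nat N + 1) - fps_exp (of_nat N))"
    by (simp add: algebra_simps Suc[symmetric] fps_exp_add_mult)
  then show ?case by simp
qed simp

lemma sum_powers_bernoulli_fact:
  "of_nat (\<Sum>j<N. j ^ m) / fact m = (\<Sum>i=0..Suc m.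
     ((of_nat N) ^ i / fact i - (if i = 0 then 1 else 0)) * (bernoulli (Suc m - i) / fact (Suc m - i)) :: rat)"
proof -
  define G where "G = fps_X / (fps_exp (1::rat) - 1)"
  define F where "F = (\<Sum>j<N. fps_exp (of_nat j :: rat))"
  have "F * fps_X = F * ((fps_exp 1 - 1) * G)"
    using bernoulli_egf_times_denominator by (simp add: G_def mult.commute)
  also have "\<dots> = (fps_exp (of_nat N) - 1) * G"
    using sum_fps_exp_times_exp_minus_1 by (simp add: F_def mult.assoc[symmetric])
  finally have eq: "F * fps_X = (fps_exp (of_nat N) - 1) * G" .
  have "(F * fps_X) $ Suc m = (\<Sum>j<N. (of_nat j) ^ m / fact m)"
    by (simp add: F_def fps_sum_nth)
  moreover have "((fps_exp (of_nat N) - 1) * G) $ Suc m = (\<Sum>i=0..Suc m.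
      ((of_nat N) ^ i / fact i - (if i = 0 then 1 else 0)) * (bernoulli (Suc m - i) / fact (Suc m - i)))"
    unfolding fps_mult_nth by (intro sum.cong refl) (simp add: bernoulli_def G_def)
  ultimately show ?thesis
    unfolding eq by (simp add: sum_divide_distrib)
qed

lemma fact_div_fact_fact_eq_binomial_div:
  assumes "1 \<le> i" "i \<le> Suc m"
  shows "fact m / (fact i * fact (Suc m - i)) = (of_nat (m choose (i - 1)) / of_nat i :: rat)"
proof -
  have "(of_nat (m choose (i - 1)) :: rat) = fact m / (fact (i - 1) * fact (m - (i - 1)))"
    using assms by (subst binomial_fact) auto
  moreover have "fact i = (of_nat i :: rat) * fact (i - 1)"
    using assms by (simp add: fact_reduce)
  moreover have "m - (i - 1) = Suc m - i" using assms by simp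
  ultimately show ?thesis using assms by (simp add: field_simps)
qed

lemma sum_powers_bernoulli:
  "of_nat (\<Sum>j<N. j ^ m) = of_nat N * bernoulli m
     + (\<Sum>i=2..Suc m. (of_nat N) ^ i * bernoulli (Suc m - i) * (of_nat (m choose (i - 1)) / of_nat i) :: rat)"
proof -
  have "of_nat (\<Sum>j<N. j ^ m) = of_nat (\<Sum>j<N. j ^ m) / fact m * (fact m :: rat)"
    by simp
  also have "\<dots> = (\<Sum>i=0..Suc m.
      ((of_nat N) ^ i / fact i - (if i = 0 then 1 else 0)) * (bernoulli (Suc m - i) / fact (Suc m - i)) * fact m)"
    unfolding sum_powers_bernoulli_fact sum_distrib_right ..
  also have "\<dots> = (\<Sum>i=1..Suc m.
      ((of_nat N) ^ i / fact i - (if i = 0 then 1 else 0)) * (bernoulli (Suc m - i) / fact (Suc m - i)) * fact m)"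
    by (rule sum.mono_neutral_right) auto
  also have "\<dots> = (\<Sum>i=1..Suc m. (of_nat N) ^ i * bernoulli (Suc m - i) * (of_nat (m choose (i - 1)) / of_nat i))"
  proof (intro sum.cong refl)
    fix i assume i: "i \<in> {1..Suc m}"
    then have "((of_nat N) ^ i / fact i - (if i = 0 then 1 else 0)) * (bernoulli (Suc m - i) / fact (Suc m - i)) * fact m
        = (of_nat N) ^ i * bernoulli (Suc m - i) * (fact m / (fact i * fact (Suc m - i)) :: rat)"
      by simp
    also have "\<dots> = (of_nat N) ^ i * bernoulli (Suc m - i) * (of_nat (m choose (i - 1)) / of_nat i)"
      using i fact_div_fact_fact_eq_binomial_div[of i m] by simp
    finally show "((of_nat N) ^ i / fact i - (if i = 0 then 1 else 0)) * (bernoulli (Suc m - i) / fact (Suc m - i)) * fact m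
        = (of_nat N) ^ i * bernoulli (Suc m - i) * (of_nat (m choose (i - 1)) / of_nat i)" .
  qed
  also have "\<dots> = of_nat N * bernoulli m
      + (\<Sum>i=2..Suc m. (of_nat N) ^ i * bernoulli (Suc m - i) * (of_nat (m choose (i - 1)) / of_nat i))"
    by (subst sum.atLeast_Suc_atMost) (simp_all add: numeral_2_eq_2)
  finally show ?thesis .
qed

lemma multiplicity_less_self:
  assumes "prime p" "m > 0"
  shows "multiplicity p m < m"
proof -
  have "p ^ multiplicity p m \<le> m"
    using assms(2) multiplicity_dvd[of p m] by (intro dvd_imp_le) auto
  moreover have "2 ^ multiplicity p m \<le> p ^ multiplicity p m"
    using prime_ge_2_nat[OF assms(1)] by (simp add: power_mono)
  moreover have "multiplicity p m < 2 ^ multiplicity p m" by (rule less_exp)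
  ultimately show ?thesis by linarith
qed

lemma less_3_power_pred: "2 \<le> i \<Longrightarrow> i < (3::nat) ^ (i - 1)"
proof (induction i rule: dec_induct)
  case (step n)
  then have "(3::nat) ^ (Suc n - 1) = 3 * 3 ^ (n - 1)" by (cases n) auto
  then show ?case using step by simp
qed simp

lemma multiplicity_le_minus_2:
  assumes "prime p" "p \<ge> 3" "i \<ge> 2"
  shows "multiplicity p i \<le> i - 2"
proof -
  have "p ^ multiplicity p i \<le> i"
    using assms(3) multiplicity_dvd[of p i] by (intro dvd_imp_le) auto
  moreover have "3 ^ multiplicity p i \<le> p ^ multiplicity p i"
    using assms(2) by (simp add: power_mono)
  ultimately have "3 ^ multiplicity p i < (3::nat) ^ (i - 1)"
    using less_3_power_pred[OF assms(3)] by linarith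
  then show ?thesis using power_less_imp_less_exp by fastforce
qed

lemma sum_powers_div_sub_bernoulli:
  assumes "N > 0"
  shows "of_nat (\<Sum>j<N. j ^ m) / of_nat N - bernoulli m
    = (\<Sum>i=2..Suc m. (of_nat N) ^ (i - 1) * bernoulli (Suc m - i) * (of_nat (m choose (i - 1)) / of_nat i) :: rat)"
proof -
  have "of_nat (\<Sum>j<N. j ^ m) / of_nat N - bernoulli m
      = (\<Sum>i=2..Suc m. (of_nat N) ^ i * bernoulli (Suc m - i) * (of_nat (m choose (i - 1)) / of_nat i) :: rat) / of_nat N"
    using assms unfolding sum_powers_bernoulli[where N = N and m = m]
    by (simp add: add_divide_distrib del: of_nat_sum)
  also have "\<dots> = (\<Sum>i=2..Suc m. (of_nat N) ^ (i - 1) * bernoulli (Suc m - i) * (of_nat (m choose (i - 1)) / of_nat i))"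
    unfolding sum_divide_distrib
  proof (intro sum.cong refl)
    fix i assume "i \<in> {2..Suc m}"
    then have "(of_nat N :: rat) ^ i = of_nat N ^ (i - 1) * of_nat N" by (cases i) auto
    then show "(of_nat N) ^ i * bernoulli (Suc m - i) * (of_nat (m choose (i - 1)) / of_nat i) / of_nat N
        = (of_nat N) ^ (i - 1) * bernoulli (Suc m - i) * (of_nat (m choose (i - 1)) / (of_nat i :: rat))"
      using assms by simp
  qed
  finally show ?thesis .
qed

lemma pval_ge_bernoulli_tail:
  assumes prime: "prime p" and "p \<ge> 3" "E \<ge> 1"
    and integral: "\<And>j. j < m \<Longrightarrow> pval_ge p 0 (of_nat p * bernoulli j)"
  shows "pval_ge p (E - 1) (\<Sum>i=2..Suc m.
    (of_nat (p ^ E)) ^ (i - 1) * bernoulli (Suc m - i) * (of_nat (m choose (i - 1)) / of_nat i))"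
proof (intro pval_ge_sum[OF prime])
  fix i assume i: "i \<in> {2..Suc m}"
  \<comment> \<open>one factor \<open>p\<close> goes to \<open>p B\<^sub>j\<close>; the rest survives division by \<open>i\<close> as \<open>v\<^sub>p(i) \<le> i - 2\<close>\<close>
  define e where "e = E * (i - 1) - 1"
  have "1 \<le> i - 1" using i by auto
  then have "E - 1 \<le> (E - 1) * (i - 1)" using mult_le_mono2[of 1 "i - 1" "E - 1"] by simp
  moreover have "E * (i - 1) = (E - 1) * (i - 1) + (i - 1)"
    using \<open>E \<ge> 1\<close> by (cases E) auto
  moreover have "multiplicity p i \<le> i - 2"
    using multiplicity_le_minus_2[OF prime \<open>p \<ge> 3\<close>] i by auto
  moreover have "2 \<le> i" using i by simp
  ultimately have mult: "E - 1 + multiplicity p i \<le> e" and e: "E * (i - 1) = Suc e"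
    unfolding e_def by linarith+
  have "pval_ge p e (of_nat p ^ e)"
    using pval_ge_of_int[OF prime, of e "int p ^ e"] by simp
  then have "pval_ge p (E - 1 + multiplicity p i) (of_nat p ^ e)"
    by (rule pval_ge_mono[OF prime mult])
  then have "pval_ge p (E - 1) (of_nat p ^ e / of_nat i)"
    using i by (intro pval_ge_divide_nat[OF prime]) auto
  then have "pval_ge p (E - 1) (of_nat p ^ e / of_nat i * of_nat (m choose (i - 1)))"
    by (rule pval_ge_mult_right[OF prime _ pval_ge_0_of_nat[OF prime]])
  moreover have "pval_ge p 0 (of_nat p * bernoulli (Suc m - i))"
    using i by (intro integral) auto
  ultimately have "pval_ge p (E - 1) ((of_nat p * bernoulli (Suc m - i)) * (of_nat p ^ e / of_nat i * of_nat (m choose (i - 1))))"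
    by (rule pval_ge_mult_left[OF prime, rotated])
  moreover have "(of_nat (p ^ E) :: rat) ^ (i - 1) = of_nat p * of_nat p ^ e"
    unfolding of_nat_power power_mult[symmetric] e by simp
  ultimately show "pval_ge p (E - 1)
      ((of_nat (p ^ E)) ^ (i - 1) * bernoulli (Suc m - i) * (of_nat (m choose (i - 1)) / of_nat i))"
    by (simp add: mult_ac)
qed

lemma pval_ge_prime_times_bernoulli:
  assumes prime: "prime p" and "p \<ge> 3"
  shows "pval_ge p 0 (of_nat p * bernoulli n)"
proof (induction n rule: less_induct)
  case (less n)
  have p: "(of_nat p :: rat) \<noteq> 0" using prime by auto
  define tail where "tail = (\<Sum>i=2..Suc n.
    (of_nat (p ^ 1)) ^ (i - 1) * bernoulli (Suc n - i) * (of_nat (n choose (i - 1)) / of_nat i) :: rat)"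
  define S :: rat where "S = of_nat (\<Sum>j<p. j ^ n)"
  have "S / of_nat p - bernoulli n = tail"
    using sum_powers_div_sub_bernoulli[where N = p and m = n] prime
    unfolding tail_def S_def by (simp add: prime_gt_0_nat del: of_nat_sum)
  then have eq: "of_nat p * bernoulli n = S - of_nat p * tail"
    using p by (simp add: field_simps)
  have "pval_ge p 0 tail"
    using pval_ge_bernoulli_tail[OF prime \<open>p \<ge> 3\<close> order.refl less] unfolding tail_def by simp
  then have "pval_ge p 0 (S - of_nat p * tail)"
    unfolding S_def by (intro pval_ge_diff[OF prime] pval_ge_mult_left[OF prime] pval_ge_0_of_nat[OF prime])
  then show ?case unfolding eq .
qed

lemma pval_ge_sum_powers_div_sub_bernoulli:
  assumes prime: "prime p" and "p \<ge> 3" "E \<ge> 1"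
  shows "pval_ge p (E - 1) (of_nat (\<Sum>j<p ^ E. j ^ m) / of_nat (p ^ E) - bernoulli m)"
proof -
  have "p ^ E > 0" using prime by (simp add: prime_gt_0_nat)
  then show ?thesis
    using pval_ge_bernoulli_tail[OF assms pval_ge_prime_times_bernoulli[OF prime \<open>p \<ge> 3\<close>]]
    by (simp only: sum_powers_div_sub_bernoulli)
qed

section \<open>Voronoi's congruence\<close>

lemma sum_mult_mod_permute:
  fixes M a :: nat
  assumes "coprime a M"
  shows "(\<Sum>j<M. f (j * a mod M)) = (\<Sum>j<M. f j)"
proof (cases "M = 0")
  case False
  have inj: "inj_on (\<lambda>j. j * a mod M) {..<M}"
  proof (rule inj_onI)
    fix x y assume xy: "x \<in> {..<M}" "y \<in> {..<M}" "x * a mod M = y * a mod M"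
    then have "[x = y] (mod M)"
      using cong_mult_rcancel_nat[of a M x y] assms by (simp add: cong_def coprime_commute)
    then show "x = y" using xy by (simp add: cong_def)
  qed
  moreover have "(\<lambda>j. j * a mod M) ` {..<M} = {..<M}"
    by (rule endo_inj_surj) (use False inj in auto)
  ultimately show ?thesis by (intro sum.reindex_bij_betw) (simp add: bij_betw_def)
qed simp

lemma power_add_mult_cong_mod_square:
  fixes x y N :: nat
  shows "[(x + y * N) ^ m = x ^ m + m * x ^ (m - 1) * y * N] (mod N ^ 2)"
proof (induction m)
  case (Suc m)
  have "(x + y * N) ^ Suc m = (x + y * N) * (x + y * N) ^ m" by simp
  also have "[\<dots> = (x + y * N) * (x ^ m + m * x ^ (m - 1) * y * N)] (mod N ^ 2)"
    using Suc by (intro cong_mult cong_refl)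
  also have "(x + y * N) * (x ^ m + m * x ^ (m - 1) * y * N)
      = x ^ Suc m + Suc m * x ^ (Suc m - 1) * y * N + N ^ 2 * (m * x ^ (m - 1) * y * y)"
    by (cases m) (simp_all add: power2_eq_square algebra_simps)
  also have "[\<dots> = x ^ Suc m + Suc m * x ^ (Suc m - 1) * y * N] (mod N ^ 2)"
    by (simp add: cong_def)
  finally show ?case .
qed simp

definition voronoi_sum :: "nat \<Rightarrow> nat \<Rightarrow> nat \<Rightarrow> nat" where
  "voronoi_sum M a n = (\<Sum>j<M. j ^ n * (j * a div M))"

lemma voronoi_cong_nat:
  fixes a M m :: nat
  assumes "coprime a M"
  shows "[a ^ m * (\<Sum>j<M. j ^ m) = (\<Sum>j<M. j ^ m) + m * M * a ^ (m - 1) * voronoi_sum M a (m - 1)] (mod M ^ 2)"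
proof -
  have each: "[(j * a) ^ m = (j * a mod M) ^ m + m * (j * a) ^ (m - 1) * (j * a div M) * M] (mod M ^ 2)" for j
  proof -
    have "[(j * a) ^ m = (j * a mod M) ^ m + m * (j * a mod M) ^ (m - 1) * (j * a div M) * M] (mod M ^ 2)"
      using power_add_mult_cong_mod_square[of "j * a mod M" "j * a div M" M m] by simp
    moreover have "[(j * a mod M) ^ (m - 1) = (j * a) ^ (m - 1)] (mod M)"
      by (intro cong_pow) (simp add: cong_def)
    then have "[m * (j * a mod M) ^ (m - 1) * (j * a div M) = m * (j * a) ^ (m - 1) * (j * a div M)] (mod M)"
      by (intro cong_mult cong_refl)
    then have "[m * (j * a mod M) ^ (m - 1) * (j * a div M) * M = m * (j * a) ^ (m - 1) * (j * a div M) * M] (mod M ^ 2)"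
      by (simp add: cong_def power2_eq_square mod_mult_mult2)
    ultimately show ?thesis by (metis cong_add_lcancel_nat cong_trans)
  qed
  have "a ^ m * (\<Sum>j<M. j ^ m) = (\<Sum>j<M. (j * a) ^ m)"
    by (simp add: sum_distrib_left power_mult_distrib mult.commute)
  also have "[\<dots> = (\<Sum>j<M. (j * a mod M) ^ m + m * (j * a) ^ (m - 1) * (j * a div M) * M)] (mod M ^ 2)"
    by (intro cong_sum each)
  also have "(\<Sum>j<M. (j * a mod M) ^ m + m * (j * a) ^ (m - 1) * (j * a div M) * M)
      = (\<Sum>j<M. (j * a mod M) ^ m) + m * M * a ^ (m - 1) * voronoi_sum M a (m - 1)"
    unfolding voronoi_sum_def
    by (simp add: sum.distrib sum_distrib_left power_mult_distrib algebra_simps)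
  also have "(\<Sum>j<M. (j * a mod M) ^ m) = (\<Sum>j<M. j ^ m)"
    using sum_mult_mod_permute[OF assms, of "\<lambda>x. x ^ m"] by simp
  finally show ?thesis .
qed

lemma exists_power_not_cong_1:
  assumes "prime p" "\<not> (p - 1) dvd n"
  obtains g where "coprime g p" "\<not> [g ^ n = 1] (mod p)"
proof -
  obtain g where g: "residue_primroot p g"
    using prime_primitive_root_exists[of p] assms(1) prime_gt_1_nat by blast
  then have "coprime p g" "ord p g = p - 1"
    using assms(1) by (auto simp: residue_primroot_def totient_prime)
  then show ?thesis
    using that assms(2) ord_divides[of g n p] by (simp add: coprime_commute)
qed

lemma sum_powers_cong_0:
  assumes "prime p" "\<not> (p - 1) dvd n"
  shows "[(\<Sum>r<p. r ^ n) = 0] (mod p)"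
proof -
  obtain g where g: "coprime g p" "\<not> [g ^ n = 1] (mod p)"
    using exists_power_not_cong_1[OF assms] by blast
  have "g ^ n * (\<Sum>r<p. r ^ n) = (\<Sum>r<p. (r * g) ^ n)"
    by (simp add: sum_distrib_left power_mult_distrib mult.commute)
  also have "[\<dots> = (\<Sum>r<p. (r * g mod p) ^ n)] (mod p)"
    by (intro cong_sum cong_pow) (simp add: cong_def)
  also have "(\<Sum>r<p. (r * g mod p) ^ n) = (\<Sum>r<p. r ^ n)"
    using sum_mult_mod_permute[OF g(1), of "\<lambda>x. x ^ n"] by simp
  finally have "[g ^ n * (\<Sum>r<p. r ^ n) = 1 * (\<Sum>r<p. r ^ n)] (mod p)" by simp
  then have "\<not> coprime (\<Sum>r<p. r ^ n) p"
    using cong_mult_rcancel_nat g(2) by blast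
  then show ?thesis
    using assms(1) by (metis cong_0_iff coprime_commute prime_imp_coprime_nat)
qed

lemma sum_powers_cong:
  assumes "prime p" "\<not> (p - 1) dvd n" "[A = B] (mod p)"
  shows "[(\<Sum>j<A. j ^ n) = (\<Sum>j<B. j ^ n)] (mod p)"
proof -
  have period: "[(\<Sum>j<A + p. j ^ n) = (\<Sum>j<A. j ^ n)] (mod p)" for A
  proof (induction A)
    case (Suc A)
    have "(\<Sum>j<Suc A + p. j ^ n) = (\<Sum>j<A + p. j ^ n) + (A + p) ^ n" by simp
    also have "[\<dots> = (\<Sum>j<A. j ^ n) + A ^ n] (mod p)"
      by (intro cong_add Suc cong_pow) (simp add: cong_def)
    finally show ?case by simp
  qed (use sum_powers_cong_0[OF assms(1,2)] in simp)
  have periodic: "[(\<Sum>j<A + p * i. j ^ n) = (\<Sum>j<A. j ^ n)] (mod p)" for A i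
  proof (induction i)
    case (Suc i)
    have "A + p * Suc i = (A + p * i) + p" by simp
    then show ?case using period[of "A + p * i"] Suc by (metis cong_trans)
  qed simp
  have "[(\<Sum>j<A. j ^ n) = (\<Sum>j<A mod p. j ^ n)] (mod p)" for A
    using periodic[of "A mod p" "A div p"] by (metis cong_sym mod_mult_div_eq)
  then show ?thesis
    using assms(3) unfolding cong_def by metis
qed

lemma voronoi_cong_rat:
  assumes "coprime a N" "N > 0"
  obtains z :: int where "(of_nat a ^ m - 1) * (of_nat (\<Sum>j<N. j ^ m) / of_nat N)
    = of_nat m * of_nat a ^ (m - 1) * of_nat (voronoi_sum N a (m - 1)) + of_nat N * (of_int z :: rat)"
proof -
  define S where "S = (\<Sum>j<N. j ^ m)"
  define T where "T = voronoi_sum N a (m - 1)"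
  have "[a ^ m * S = S + m * N * a ^ (m - 1) * T] (mod N ^ 2)"
    unfolding S_def T_def using assms(1) by (rule voronoi_cong_nat)
  then obtain z where "int (a ^ m * S) - int (S + m * N * a ^ (m - 1) * T) = int (N ^ 2) * z"
    by (metis cong_iff_dvd_diff cong_int_iff dvdE)
  then have "(of_int (int (a ^ m * S) - int (S + m * N * a ^ (m - 1) * T)) :: rat) = of_int (int (N ^ 2) * z)"
    by simp
  then have "(of_nat a ^ m - 1) * of_nat S
      = of_nat N * (of_nat m * of_nat a ^ (m - 1) * of_nat T + of_nat N * (of_int z :: rat))"
    by (simp add: algebra_simps power2_eq_square)
  then have "(of_nat a ^ m - 1) * (of_nat S / of_nat N)
      = of_nat m * of_nat a ^ (m - 1) * of_nat T + of_nat N * (of_int z :: rat)"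
    using assms(2) by (metis of_nat_0_less_iff order_less_irrefl nonzero_mult_div_cancel_left times_divide_eq_right)
  then show thesis unfolding S_def T_def by (rule that)
qed

text \<open>After division by \<open>N = p\<^sup>E\<close>, the power sum approximates \<open>B\<^sub>m\<close> to order \<open>p\<^sup>E\<^sup>-\<^sup>1\<close>,
  which absorbs the denominator \<open>m\<close>.\<close>

lemma voronoi_congruence:
  assumes prime: "prime p" and "p \<ge> 3" and "coprime a p" and "m \<ge> 1" and "E \<ge> m + 2"
  shows "pval_ge p 1 ((of_nat a ^ m - 1) * bernoulli m / of_nat m
    - of_nat a ^ (m - 1) * of_nat (voronoi_sum (p ^ E) a (m - 1)))"
proof -
  define N where "N = p ^ E"
  define S where "S = (\<Sum>j<N. j ^ m)"
  define T where "T = voronoi_sum N a (m - 1)"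
  have "coprime a N" "N > 0" using assms(3) prime prime_gt_0_nat unfolding N_def by auto
  then obtain z where z: "(of_nat a ^ m - 1) * (of_nat S / of_nat N)
      = of_nat m * of_nat a ^ (m - 1) * of_nat T + of_nat N * (of_int z :: rat)"
    unfolding S_def T_def by (rule voronoi_cong_rat)
  have key: "(of_nat a ^ m - 1) * bernoulli m / of_nat m - of_nat a ^ (m - 1) * of_nat T
      = ((of_nat a ^ m - 1) * - (of_nat S / of_nat N - bernoulli m) + of_nat N * of_int z) / of_nat m"
  proof -
    have "(of_nat a ^ m - 1) * - (of_nat S / of_nat N - bernoulli m) + of_nat N * of_int z
        = (of_nat a ^ m - 1) * bernoulli m - (of_nat a ^ m - 1) * (of_nat S / of_nat N) + of_nat N * of_int z"
      by (simp add: algebra_simps)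
    also have "\<dots> = (of_nat a ^ m - 1) * bernoulli m - of_nat m * of_nat a ^ (m - 1) * of_nat T"
      unfolding z by simp
    finally show ?thesis using \<open>m \<ge> 1\<close> by (simp add: field_simps)
  qed
  have mult: "1 + multiplicity p m \<le> E - 1"
    using multiplicity_less_self[OF prime, of m] assms(4,5) by simp
  have "pval_ge p (E - 1) ((of_nat a ^ m - 1) * - (of_nat S / of_nat N - bernoulli m))"
    using pval_ge_sum_powers_div_sub_bernoulli[OF prime \<open>p \<ge> 3\<close>, of E m] assms(5)
    unfolding S_def N_def
    by (intro pval_ge_mult_left[OF prime] pval_ge_uminus[OF prime])
       (simp_all add: pval_ge_0_of_int[OF prime, of "int a ^ m - 1", simplified])
  moreover have "pval_ge p E (of_nat N * of_int z)"
    using pval_ge_of_int[OF prime, of E "int N * z"] unfolding N_def by simp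
  ultimately have "pval_ge p (1 + multiplicity p m)
      ((of_nat a ^ m - 1) * - (of_nat S / of_nat N - bernoulli m) + of_nat N * of_int z)"
    using mult by (intro pval_ge_add[OF prime]) (auto elim: pval_ge_mono[OF prime, rotated])
  then show ?thesis
    unfolding key N_def[symmetric] T_def[symmetric]
    using \<open>m \<ge> 1\<close> by (intro pval_ge_divide_nat[OF prime]) (simp_all add: add.commute)
qed

lemma pval_ge_bernoulli_div_index:
  assumes prime: "prime p" and "p \<ge> 3" "m \<ge> 1" "\<not> (p - 1) dvd m"
  shows "pval_ge p 0 (bernoulli m / of_nat m)"
proof -
  obtain g where g: "coprime g p" "\<not> [g ^ m = 1] (mod p)"
    using exists_power_not_cong_1[OF prime assms(4)] by blast
  define T :: rat where "T = of_nat (g ^ (m - 1) * voronoi_sum (p ^ (m + 2)) g (m - 1))"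
  have "pval_ge p 1 ((of_nat g ^ m - 1) * bernoulli m / of_nat m - T)"
    using voronoi_congruence[OF prime \<open>p \<ge> 3\<close> g(1) \<open>m \<ge> 1\<close>, of "m + 2"] unfolding T_def by simp
  then have "pval_ge p 0 (((of_nat g ^ m - 1) * bernoulli m / of_nat m - T) + T)"
    using pval_ge_mono[OF prime, of 0 1] unfolding T_def
    by (intro pval_ge_add[OF prime] pval_ge_0_of_nat[OF prime]) auto
  then have "pval_ge p 0 (of_int (int g ^ m - 1) * (bernoulli m / of_nat m))" by simp
  moreover have "\<not> int p dvd int g ^ m - 1"
    using g(2) by (metis cong_iff_dvd_diff cong_int_iff of_nat_1 of_nat_power)
  ultimately show ?thesis by (rule pval_ge_cancel_int[OF prime])
qed

definition ceil_div :: "nat \<Rightarrow> nat \<Rightarrow> nat" where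
  "ceil_div x a = (x + a - 1) div a"

lemma ceil_div_le_iff:
  assumes "a > 0"
  shows "ceil_div x a \<le> j \<longleftrightarrow> x \<le> j * a"
proof -
  have "ceil_div x a \<le> j \<longleftrightarrow> x + a - 1 < Suc j * a"
    unfolding ceil_div_def less_Suc_eq_le[symmetric] using assms by (rule div_less_iff_less_mult)
  also have "\<dots> \<longleftrightarrow> x \<le> j * a" using assms by auto
  finally show ?thesis .
qed

lemma ceil_div_cong:
  assumes "coprime a p" "a > 0" "[M = M'] (mod a)" "[M = M'] (mod p)"
  shows "[ceil_div (l * M) a = ceil_div (l * M') a] (mod p)"
proof -
  have div: "int a * int (x div a) = int x - int (x mod a)" for x
    by (simp add: zdiv_int zmod_int minus_mod_eq_mult_div)
  have "[l * M + (a - 1) = l * M' + (a - 1)] (mod a)"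
    using assms(3) by (intro cong_add cong_mult cong_refl)
  then have "(l * M + a - 1) mod a = (l * M' + a - 1) mod a"
    using assms(2) by (simp add: cong_def)
  then have "int a * (int (ceil_div (l * M) a) - int (ceil_div (l * M') a)) = int l * (int M - int M')"
    using div[of "l * M + a - 1"] div[of "l * M' + a - 1"] assms(2)
    unfolding ceil_div_def by (simp add: algebra_simps of_nat_diff)
  moreover have "int p dvd int M - int M'"
    using assms(4) by (simp add: cong_iff_dvd_diff[symmetric] cong_int_iff)
  ultimately have "int p dvd int a * (int (ceil_div (l * M) a) - int (ceil_div (l * M') a))"
    by simp
  moreover have "coprime (int p) (int a)" using assms(1) by (simp add: coprime_commute)
  ultimately show ?thesis
    using coprime_dvd_mult_right_iff by (metis cong_iff_dvd_diff cong_int_iff)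
qed

lemma mult_div_eq_count:
  fixes j a M :: nat
  assumes "a > 0" "j < M"
  shows "j * a div M = (\<Sum>l\<in>{1..<a}. if l * M \<le> j * a then 1 else 0)"
proof -
  have "j * a div M < a" using assms by (simp add: div_less_iff_less_mult)
  then have "{l \<in> {1..<a}. l \<le> j * a div M} = {1..j * a div M}" by auto
  moreover have "l * M \<le> j * a \<longleftrightarrow> l \<le> j * a div M" for l
    using assms by (simp add: less_eq_div_iff_mult_less_eq)
  ultimately show ?thesis by (simp add: sum.If_cases Int_def)
qed

lemma voronoi_sum_eq_sum_diff:
  assumes "a > 0" "M > 0"
  shows "int (voronoi_sum M a n)
    = (\<Sum>l\<in>{1..<a}. int (\<Sum>j<M. j ^ n) - int (\<Sum>j<ceil_div (l * M) a. j ^ n))"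
proof -
  have "voronoi_sum M a n = (\<Sum>j<M. \<Sum>l\<in>{1..<a}. if l * M \<le> j * a then j ^ n else 0)"
    unfolding voronoi_sum_def
    by (auto simp: mult_div_eq_count assms sum_distrib_left intro!: sum.cong)
  also have "\<dots> = (\<Sum>l\<in>{1..<a}. \<Sum>j<M. if l * M \<le> j * a then j ^ n else 0)"
    by (rule sum.swap)
  finally have "int (voronoi_sum M a n) = (\<Sum>l\<in>{1..<a}. int (\<Sum>j<M. if l * M \<le> j * a then j ^ n else 0))"
    by simp
  also have "\<dots> = (\<Sum>l\<in>{1..<a}. int (\<Sum>j<M. j ^ n) - int (\<Sum>j<ceil_div (l * M) a. j ^ n))"
  proof (intro sum.cong refl)
    fix l assume "l \<in> {1..<a}"
    then have le: "ceil_div (l * M) a \<le> M" using ceil_div_le_iff[OF assms(1)] by simp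
    have "(\<Sum>j<M. if l * M \<le> j * a then j ^ n else 0) = (\<Sum>j\<in>{ceil_div (l * M) a..<M}. j ^ n)"
      by (rule sum.mono_neutral_cong_right) (auto simp: ceil_div_le_iff[OF assms(1)])
    moreover have "(\<Sum>j<M. j ^ n) = (\<Sum>j<ceil_div (l * M) a. j ^ n) + (\<Sum>j\<in>{ceil_div (l * M) a..<M}. j ^ n)"
      using sum.atLeastLessThan_concat[of 0 "ceil_div (l * M) a" M "\<lambda>j. j ^ n"] le
      by (simp add: lessThan_atLeast0)
    ultimately show "int (\<Sum>j<M. if l * M \<le> j * a then j ^ n else 0)
        = int (\<Sum>j<M. j ^ n) - int (\<Sum>j<ceil_div (l * M) a. j ^ n)"
      by simp
  qed
  finally show ?thesis .
qed

lemma voronoi_sum_cong: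
  assumes prime: "prime p" and "\<not> (p - 1) dvd n" "coprime a p" "a > 0" "M > 0" "M' > 0"
    and "[M = M'] (mod a)" "[M = M'] (mod p)"
  shows "[int (voronoi_sum M a n) = int (voronoi_sum M' a n)] (mod int p)"
proof -
  have "[int (\<Sum>j<A. j ^ n) = int (\<Sum>j<B. j ^ n)] (mod int p)" if "[A = B] (mod p)" for A B
    using sum_powers_cong[OF prime assms(2) that] cong_int_iff by blast
  then show ?thesis
    unfolding voronoi_sum_eq_sum_diff[OF assms(4,5)] voronoi_sum_eq_sum_diff[OF assms(4,6)]
    using ceil_div_cong[OF assms(3,4,7,8)] assms(8)
    by (intro cong_sum cong_diff) auto
qed

lemma prime_power_cong_self:
  assumes "coprime p a"
  shows "[p ^ (1 + totient a * j) = p] (mod a)"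
proof -
  have "[(p ^ totient a) ^ j = 1] (mod a)"
    using cong_pow[OF euler_theorem[OF assms], of j] by simp
  then have "[p * (p ^ totient a) ^ j = p * 1] (mod a)" by (intro cong_mult cong_refl)
  then show ?thesis by (simp add: power_mult)
qed

lemma voronoi_sum_prime_power_cong:
  assumes prime: "prime p" and "\<not> (p - 1) dvd n" "coprime a p" "a > 0"
  shows "int p dvd int (voronoi_sum (p ^ (1 + totient a * j)) a n) - int (voronoi_sum p a n)"
proof -
  have "[p ^ (1 + totient a * j) = p] (mod a)"
    using assms(3) by (intro prime_power_cong_self) (simp add: coprime_commute)
  moreover have "[p ^ (1 + totient a * j) = p] (mod p)" by (simp add: cong_def)
  ultimately have "[int (voronoi_sum (p ^ (1 + totient a * j)) a n) = int (voronoi_sum p a n)] (mod int p)"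
    using prime assms(2-4) by (intro voronoi_sum_cong) (auto simp: prime_gt_0_nat)
  then show ?thesis by (simp add: cong_iff_dvd_diff)
qed

lemma fermat_dvd_int:
  assumes "prime p" "\<not> p dvd a"
  shows "int p dvd int a ^ (p - 1) - 1" "int p dvd int a ^ p - int a"
proof -
  have "[a ^ (p - 1) = 1] (mod p)" by (rule fermat_theorem[OF assms])
  then show *: "int p dvd int a ^ (p - 1) - 1"
    by (metis cong_iff_dvd_diff cong_int_iff of_nat_1 of_nat_power)
  obtain q where "p = Suc q" using prime_gt_0_nat[OF assms(1)] gr0_implies_Suc by blast
  then have "int a ^ p - int a = int a * (int a ^ (p - 1) - 1)" by (simp add: algebra_simps)
  then show "int p dvd int a ^ p - int a" using * by simp
qed

lemma power_int_mult_power: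
  fixes x :: "'a :: division_ring"
  assumes "x \<noteq> 0"
  shows "x powi i * x ^ n = x powi (i + int n)"
  using assms by (simp add: power_int_add)

text \<open>Voronoi's congruence for \<open>p\<^sup>E \<equiv> p (mod a)\<close>, multiplied by \<open>a\<^sup>p\<^sup>-\<^sup>m\<close>; Fermat's little
  theorem turns the resulting \<open>a\<^sup>p\<close> and \<open>a\<^sup>p\<^sup>-\<^sup>1\<close> into \<open>a\<close> and \<open>1\<close>.\<close>

lemma voronoi_congruence_mod_p:
  assumes prime: "prime p" and "p \<ge> 3" "a > 0" "coprime a p" "even m" "m > 0" "\<not> (p - 1) dvd m"
  shows "pval_ge p 1 ((of_nat a powi (int p - int m) - of_nat a) * (bernoulli m / of_nat m)
    + of_nat (voronoi_sum p a (m - 1)))"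
proof -
  define E where "E = 1 + totient a * (m + 2)"
  define u :: rat where "u = of_nat a powi (int p - int m)"
  define b where "b = bernoulli m / of_nat m"
  define T where "T = voronoi_sum (p ^ E) a (m - 1)"
  define V where "V = (of_nat a ^ m - 1) * b - of_nat a ^ (m - 1) * of_nat T"
  have "totient a \<ge> 1" using \<open>a > 0\<close> by (simp add: Suc_le_eq)
  then have "E \<ge> m + 2" unfolding E_def using mult_le_mono1[of 1 "totient a" "m + 2"] by simp
  then have V: "pval_ge p 1 V"
    using voronoi_congruence[OF prime \<open>p \<ge> 3\<close> \<open>coprime a p\<close>] \<open>m > 0\<close>
    unfolding V_def T_def b_def by simp
  have "odd (m - 1)" "even (p - 1)"
    using \<open>even m\<close> \<open>m > 0\<close> prime \<open>p \<ge> 3\<close> by (auto simp: prime_odd_nat)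
  then have "\<not> (p - 1) dvd (m - 1)" by (metis dvd_trans)
  then have T: "int p dvd int T - int (voronoi_sum p a (m - 1))"
    unfolding T_def E_def using voronoi_sum_prime_power_cong[OF prime _ assms(4,3)] by blast
  have not_dvd: "\<not> p dvd a"
    using \<open>coprime a p\<close> prime by (metis coprime_common_divisor dvd_refl not_prime_unit)
  note F = fermat_dvd_int[OF prime not_dvd]
  have u: "pval_ge p 0 u"
    unfolding u_def by (rule pval_ge_power_int[OF prime not_dvd])
  have b: "pval_ge p 0 b"
    unfolding b_def using assms(6,7) by (intro pval_ge_bernoulli_div_index[OF prime \<open>p \<ge> 3\<close>]) auto
  have "int p - int m + int (m - 1) = int (p - 1)"
    using \<open>m > 0\<close> prime_gt_0_nat[OF prime] by simp
  then have "u * of_nat a ^ m = of_nat a ^ p" "u * of_nat a ^ (m - 1) = of_nat a ^ (p - 1)"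
    using \<open>a > 0\<close> unfolding u_def by (simp_all add: power_int_mult_power del: of_nat_diff)
  then have "(u - of_nat a) * b + of_nat (voronoi_sum p a (m - 1))
      = - u * V + of_int (int a ^ p - int a) * b - of_int (int a ^ (p - 1) - 1) * of_nat T
        - of_int (int T - int (voronoi_sum p a (m - 1)))"
    unfolding V_def by (simp add: algebra_simps)
  also have "pval_ge p 1 \<dots>"
  proof (intro pval_ge_diff[OF prime] pval_ge_add[OF prime])
    show "pval_ge p 1 (- u * V)"
      by (rule pval_ge_mult_left[OF prime pval_ge_uminus[OF prime u] V])
    show "pval_ge p 1 (of_int (int a ^ p - int a) * b)"
      by (rule pval_ge_mult_right[OF prime pval_ge_of_int[OF prime] b]) (use F in simp)
    show "pval_ge p 1 (of_int (int a ^ (p - 1) - 1) * of_nat T)"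
      by (rule pval_ge_mult_right[OF prime pval_ge_of_int[OF prime] pval_ge_0_of_nat[OF prime]])
        (use F in simp)
    show "pval_ge p 1 (of_int (int T - int (voronoi_sum p a (m - 1))))"
      by (rule pval_ge_of_int[OF prime]) (use T in simp)
  qed
  finally show ?thesis unfolding u_def b_def .
qed

section \<open>Reduction of the right-hand side to a finite computation\<close>

definition ints_between :: "nat \<Rightarrow> int \<Rightarrow> int \<Rightarrow> int set" where
  "ints_between p X Y = {s. X * int p < 180 * s \<and> 180 * s < Y * int p}"

lemma S_sum_eq_sum_ints_between:
  assumes "x = of_int X / 180" "y = of_int Y / 180"
  shows "S_sum p l x y = of_int (\<Sum>s\<in>ints_between p X Y. s ^ l)"
proof -
  have "x * of_nat p < of_int s \<longleftrightarrow> X * int p < 180 * s"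
    and "of_int s < y * of_nat p \<longleftrightarrow> 180 * s < Y * int p" for s
    unfolding assms of_int_less_iff[where 'a = rat, symmetric] by (simp_all add: field_simps)
  then show ?thesis unfolding S_sum_def ints_between_def by simp
qed

text \<open>An entry \<open>(\<sigma>, c, X, Y)\<close> stands for the term \<open>\<sigma> c\<^sup>t S\<^sub>t(X/180, Y/180)\<close>; the list is the right-hand
  side of the theorem with its coefficients multiplied out.\<close>

definition rhs_terms :: "(int \<times> int \<times> int \<times> int) list" where
  "rhs_terms = [(1, 3, 10, 11), (1, 6, 10, 11),
    (1, 3, 11, 12), (1, 6, 11, 12), (-1, 10, 11, 12),
    (-1, 6, 24, 25), (1, 10, 24, 25), (-1, 12, 24, 25),
    (1, 6, 35, 36), (1, 12, 35, 36),
    (-1, 10, 47, 48),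
    (-1, 2, 54, 55), (-1, 6, 54, 55), (-1, 12, 54, 55),
    (1, 10, 60, 61),
    (1, 6, 65, 66), (1, 12, 65, 66),
    (-1, 10, 83, 84)]"

definition rhs_int :: "nat \<Rightarrow> nat \<Rightarrow> int" where
  "rhs_int p t = sum_list (map (\<lambda>(\<sigma>, c, X, Y). \<sigma> * (\<Sum>s\<in>ints_between p X Y. (c * s) ^ t)) rhs_terms)"

lemma rhs_eq_rhs_int:
  "(3 ^ t + 6 ^ t) * S_sum p t (1/18) (11/180)
     + (3 ^ t + 6 ^ t - 10 ^ t) * S_sum p t (11/180) (1/15)
     - (6 ^ t - 10 ^ t + 12 ^ t) * S_sum p t (2/15) (5/36)
     + (6 ^ t + 12 ^ t) * S_sum p t (7/36) (1/5)
     - 10 ^ t * S_sum p t (47/180) (4/15)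
     - (2 ^ t + 6 ^ t + 12 ^ t) * S_sum p t (3/10) (11/36)
     + 10 ^ t * S_sum p t (1/3) (61/180)
     + (6 ^ t + 12 ^ t) * S_sum p t (13/36) (11/30)
     - 10 ^ t * S_sum p t (83/180) (7/15) = of_int (rhs_int p t)"
proof -
  have "(\<Sum>s\<in>ints_between p X Y. (c * s) ^ t) = c ^ t * (\<Sum>s\<in>ints_between p X Y. s ^ t)" for c X Y :: int
    by (simp add: sum_distrib_left power_mult_distrib)
  then show ?thesis
    unfolding rhs_int_def rhs_terms_def
    by (simp add: S_sum_eq_sum_ints_between[of "1/18" 10 "11/180" 11]
        S_sum_eq_sum_ints_between[of "11/180" 11 "1/15" 12]
        S_sum_eq_sum_ints_between[of "2/15" 24 "5/36" 25]
        S_sum_eq_sum_ints_between[of "7/36" 35 "1/5" 36]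
        S_sum_eq_sum_ints_between[of "47/180" 47 "4/15" 48]
        S_sum_eq_sum_ints_between[of "3/10" 54 "11/36" 55]
        S_sum_eq_sum_ints_between[of "1/3" 60 "61/180" 61]
        S_sum_eq_sum_ints_between[of "13/36" 65 "11/30" 66]
        S_sum_eq_sum_ints_between[of "83/180" 83 "7/15" 84]
        algebra_simps del: of_int_sum)
qed

text \<open>\<open>total_weight g q\<close> is the coefficient of \<open>r\<^sup>t\<close>, modulo \<open>p\<close>, in
  \<open>2 R + T(p, 2) + T(p, 5) - T(p, 6)\<close> for the residues \<open>r\<close> with \<open>\<lfloor>180 r / p\<rfloor> = q\<close> and
  \<open>g p + r \<equiv> 0 (mod 60)\<close>, where \<open>R\<close> is the right-hand side and \<open>T\<close> the Voronoi sum.\<close>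

definition shifted_intervals :: "int \<Rightarrow> (int \<times> int \<times> int) list" where
  "shifted_intervals g =
    map (\<lambda>(\<sigma>, c, X, Y). (\<sigma>, c * X - 180 * (g mod c), c * Y - 180 * (g mod c))) rhs_terms"

fun interval_weight :: "(int \<times> int \<times> int) list \<Rightarrow> int \<Rightarrow> int" where
  "interval_weight [] q = 0"
| "interval_weight ((\<sigma>, a, b) # xs) q = (if a \<le> q \<and> q < b then \<sigma> else 0) + interval_weight xs q"

definition voronoi_weight :: "int \<Rightarrow> int" where
  "voronoi_weight q = q div 90 + q div 36 - q div 30"

definition total_weight :: "int \<Rightarrow> int \<Rightarrow> int" where
  "total_weight g q = 2 * interval_weight (shifted_intervals g) q + voronoi_weight q"

text \<open>The interval lists of \<open>g\<close> and \<open>59 - g\<close> are passed precomputed, so that the evaluation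
  below builds each of them only once per \<open>g\<close>.\<close>

fun mirrored_weights :: "(int \<times> int \<times> int) list \<Rightarrow> (int \<times> int \<times> int) list \<Rightarrow> int list \<Rightarrow> bool" where
  "mirrored_weights I J [] = True"
| "mirrored_weights I J (q # qs) \<longleftrightarrow>
    2 * interval_weight I q + voronoi_weight q = 2 * interval_weight J (179 - q) + voronoi_weight (179 - q)
    \<and> mirrored_weights I J qs"

definition mirrored_at :: "int \<Rightarrow> bool" where
  "mirrored_at g \<longleftrightarrow> mirrored_weights (shifted_intervals g) (shifted_intervals (59 - g)) [0..89]"

lemma mirrored_at_0_14: "list_all mirrored_at [0..14]" by code_simp
lemma mirrored_at_15_29: "list_all mirrored_at [15..29]" by code_simp
lemma mirrored_at_30_44: "list_all mirrored_at [30..44]" by code_simp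
lemma mirrored_at_45_59: "list_all mirrored_at [45..59]" by code_simp

lemma mirrored_weights_iff:
  "mirrored_weights I J qs \<longleftrightarrow> (\<forall>q\<in>set qs.
     2 * interval_weight I q + voronoi_weight q = 2 * interval_weight J (179 - q) + voronoi_weight (179 - q))"
  by (induction qs) auto

lemma total_weight_mirror_half:
  assumes "0 \<le> g" "g < 60" "0 \<le> q" "q \<le> 89"
  shows "total_weight g q = total_weight (59 - g) (179 - q)"
proof -
  have "[0..59] = [0..14] @ [15..29] @ [30..44] @ [45..(59::int)]" by code_simp
  then have "list_all mirrored_at [0..59]"
    using mirrored_at_0_14 mirrored_at_15_29 mirrored_at_30_44 mirrored_at_45_59 by simp
  then show ?thesis
    using assms unfolding list_all_iff mirrored_at_def mirrored_weights_iff total_weight_def by auto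
qed

lemma total_weight_mirror:
  assumes "0 \<le> g" "g < 60" "0 \<le> q" "q < 180"
  shows "total_weight g q = total_weight (59 - g) (179 - q)"
proof (cases "q \<le> 89")
  case False
  then show ?thesis using total_weight_mirror_half[of "59 - g" "179 - q"] assms by simp
qed (use total_weight_mirror_half assms in simp)

lemma interval_weight_shifted:
  "interval_weight (shifted_intervals g) q = sum_list (map (\<lambda>(\<sigma>, c, X, Y).
     if c * X - 180 * (g mod c) \<le> q \<and> q < c * Y - 180 * (g mod c) then \<sigma> else 0) rhs_terms)"
proof -
  have "interval_weight xs q = sum_list (map (\<lambda>(\<sigma>, a, b). if a \<le> q \<and> q < b then \<sigma> else 0) xs)" for xs
    by (induction xs) auto
  then show ?thesis
    unfolding shifted_intervals_def map_map
    by (simp only:) (intro arg_cong[where f = sum_list] map_cong refl, auto)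
qed

lemma mult_less_iff_le_div:
  fixes z N P :: int assumes "P > 0" "\<not> P dvd z"
  shows "N * P < z \<longleftrightarrow> N \<le> z div P"
proof -
  have z: "z = P * (z div P) + z mod P" by simp
  have r: "0 < z mod P" "z mod P < P" using assms by (auto simp: dvd_eq_mod_eq_0 order_le_neq_trans)
  have e: "(z div P + 1) * P = P * (z div P) + P" by (simp add: algebra_simps)
  have e2: "(z div P) * P = P * (z div P)" by (simp add: algebra_simps)
  show ?thesis
  proof
    assume "N * P < z"
    then have "N * P < (z div P + 1) * P" using z r e by linarith
    then have "N < z div P + 1" using assms(1) by (simp add: mult_less_cancel_right)
    then show "N \<le> z div P" by simp
  next
    assume "N \<le> z div P"
    then have "N * P \<le> (z div P) * P" using assms(1) by (simp add: mult_right_mono)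
    then show "N * P < z" using z r e2 by linarith
  qed
qed

lemma less_mult_iff_div_less:
  fixes z M P :: int assumes "P > 0"
  shows "z < M * P \<longleftrightarrow> z div P < M"
proof -
  have z: "z = P * (z div P) + z mod P" by simp
  have r: "0 \<le> z mod P" "z mod P < P" using assms by auto
  have e: "(z div P + 1) * P = P * (z div P) + P" by (simp add: algebra_simps)
  have e2: "(z div P) * P = P * (z div P)" by (simp add: algebra_simps)
  show ?thesis
  proof
    assume "z < M * P"
    then have "(z div P) * P < M * P" using z r e2 by linarith
    then show "z div P < M" using assms by (simp add: mult_less_cancel_right)
  next
    assume "z div P < M"
    then have "z div P + 1 \<le> M" by simp
    then have "(z div P + 1) * P \<le> M * P" using assms by (simp add: mult_right_mono)
    then show "z < M * P" using z r e by linarith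
  qed
qed

lemma prime_not_dvd_180:
  assumes "prime (p::nat)" "p \<ge> 7" shows "\<not> int p dvd 180"
proof
  assume "int p dvd 180"
  then have d: "p dvd 180" by (simp add: int_dvd_int_iff[symmetric])
  have d1: "p dvd 2 \<or> p dvd 90" using prime_dvd_mult_iff[OF assms(1), of 2 90] d by simp
  have d2: "p dvd 90 \<Longrightarrow> p dvd 2 \<or> p dvd 45" using prime_dvd_mult_iff[OF assms(1), of 2 45] by simp
  have d3: "p dvd 45 \<Longrightarrow> p dvd 3 \<or> p dvd 15" using prime_dvd_mult_iff[OF assms(1), of 3 15] by simp
  have d4: "p dvd 15 \<Longrightarrow> p dvd 3 \<or> p dvd 5" using prime_dvd_mult_iff[OF assms(1), of 3 5] by simp
  have "p dvd 2 \<or> p dvd 3 \<or> p dvd 5" using d1 d2 d3 d4 by blast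
  then have "p \<le> 5" by (auto dest: dvd_imp_le)
  then show False using assms(2) by simp
qed

lemma not_dvd_180_mult:
  assumes prime: "prime p" and "p \<ge> 7" "0 < r" "r < int p"
  shows "\<not> int p dvd 180 * r"
proof
  assume "int p dvd 180 * r"
  then have "int p dvd 180 \<or> int p dvd r" using prime by (simp add: prime_dvd_mult_iff)
  then show False
    using prime_not_dvd_180[OF prime \<open>p \<ge> 7\<close>] assms(3,4) zdvd_imp_le[of "int p" r] by auto
qed

lemma coprime_divisor_180:
  assumes prime: "prime p" and "p \<ge> 7" "c dvd 180"
  shows "coprime c (int p)"
proof -
  have "\<not> int p dvd c"
  proof
    assume "int p dvd c"
    then have "int p dvd 180" using \<open>c dvd 180\<close> by (rule dvd_trans)
    then show False using prime_not_dvd_180[OF prime \<open>p \<ge> 7\<close>] by simp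
  qed
  then show ?thesis
    using prime prime_imp_coprime[of "int p" c] by (simp add: coprime_commute)
qed

lemma ints_between_bounds:
  assumes "0 \<le> X" "Y \<le> 180" "s \<in> ints_between p X Y"
  shows "0 < s" "s < int p"
proof -
  have h: "X * int p < 180 * s" "180 * s < Y * int p" using assms(3) by (auto simp: ints_between_def)
  have "0 \<le> X * int p" using assms(1) by simp
  then show "0 < s" using h(1) by linarith
  have "Y * int p \<le> 180 * int p" using assms(2) by (simp add: mult_right_mono)
  then show "s < int p" using h(2) by linarith
qed

lemma mem_ints_between_iff:
  assumes prime: "prime p" and "p \<ge> 7" "c > 0" "c * s = r + j * int p" "0 < r" "r < int p"
  shows "s \<in> ints_between p X Y
    \<longleftrightarrow> c * X - 180 * j \<le> 180 * r div int p \<and> 180 * r div int p < c * Y - 180 * j"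
proof -
  have p: "int p > 0" using \<open>p \<ge> 7\<close> by simp
  have "c * (180 * s) = 180 * (c * s)" by simp
  also have "\<dots> = 180 * r + 180 * j * int p" unfolding assms(4) by (simp add: algebra_simps)
  finally have "c * (180 * s) = 180 * r + 180 * j * int p" .
  moreover have "c * (X * int p) = (c * X - 180 * j) * int p + 180 * j * int p"
    "c * (Y * int p) = (c * Y - 180 * j) * int p + 180 * j * int p"
    by (simp_all add: algebra_simps)
  moreover have "X * int p < 180 * s \<longleftrightarrow> c * (X * int p) < c * (180 * s)"
    "180 * s < Y * int p \<longleftrightarrow> c * (180 * s) < c * (Y * int p)"
    using \<open>c > 0\<close> by simp_all
  ultimately have "X * int p < 180 * s \<longleftrightarrow> (c * X - 180 * j) * int p < 180 * r"
    "180 * s < Y * int p \<longleftrightarrow> 180 * r < (c * Y - 180 * j) * int p"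
    by linarith+
  then show ?thesis
    unfolding ints_between_def
    using mult_less_iff_le_div[OF p not_dvd_180_mult[OF prime \<open>p \<ge> 7\<close> assms(5,6)]]
      less_mult_iff_div_less[OF p]
    by simp
qed

lemma dvd_add_label_mult:
  fixes c g r P :: int
  assumes "c dvd 60" "60 dvd g * P + r"
  shows "c dvd r + (g mod c) * P"
proof -
  have eq: "r + (g mod c) * P = (g * P + r) - c * (g div c * P)"
    by (simp add: algebra_simps flip: minus_mod_eq_mult_div[of g c])
  have "c dvd g * P + r" using assms by (rule dvd_trans)
  then have "c dvd (g * P + r) - c * (g div c * P)" by (intro dvd_diff) simp_all
  then show ?thesis unfolding eq .
qed

lemma mult_eq_residue_add_label:
  fixes c j r s P :: int
  assumes "coprime c P" "0 \<le> j" "j < c" "c dvd r + j * P" "0 < s" "s < P" "c * s mod P = r"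
  shows "c * s = r + j * P"
proof -
  define i where "i = c * s div P"
  have cs: "c * s = r + i * P" using div_mult_mod_eq[of "c * s" P] assms(7) unfolding i_def by linarith
  have "c > 0" "P > 0" using assms(2,3,5,6) by simp_all
  then have "0 \<le> i" "i < c"
    using assms(5,6) less_mult_iff_div_less[of P "c * s" c] unfolding i_def
    by (simp_all add: pos_imp_zdiv_nonneg_iff mult.commute)
  have "c dvd r + i * P" unfolding cs[symmetric] by simp
  then have "c dvd (r + i * P) - (r + j * P)" using assms(4) by (rule dvd_diff)
  then have "c dvd (i - j) * P" by (simp add: algebra_simps)
  then have "i mod c = j mod c"
    using assms(1) by (simp add: coprime_dvd_mult_left_iff mod_eq_dvd_iff)
  then have "i = j" using \<open>0 \<le> i\<close> \<open>i < c\<close> assms(2,3) by simp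
  then show ?thesis using cs by simp
qed

definition mult_residues :: "nat \<Rightarrow> int \<Rightarrow> int \<Rightarrow> int \<Rightarrow> int set" where
  "mult_residues p c X Y = (\<lambda>s. c * s mod int p) ` ints_between p X Y"

lemma mem_mult_residues_iff:
  assumes prime: "prime p" and "p \<ge> 7" "c > 0" "c dvd 60" "0 \<le> X" "Y \<le> 180"
    and r: "0 < r" "r < int p" and "60 dvd g * int p + r"
  shows "r \<in> mult_residues p c X Y \<longleftrightarrow>
     c * X - 180 * (g mod c) \<le> 180 * r div int p \<and> 180 * r div int p < c * Y - 180 * (g mod c)"
proof -
  have label: "c dvd r + (g mod c) * int p"
    using assms(4,9) by (rule dvd_add_label_mult)
  have cop: "coprime c (int p)"
    using dvd_trans[OF assms(4), of 180] by (intro coprime_divisor_180[OF prime \<open>p \<ge> 7\<close>]) simp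
  show ?thesis
  proof
    assume "r \<in> mult_residues p c X Y"
    then obtain s where s: "s \<in> ints_between p X Y" "c * s mod int p = r"
      by (auto simp: mult_residues_def)
    then have "c * s = r + (g mod c) * int p"
      using ints_between_bounds[OF assms(5,6) s(1)] \<open>c > 0\<close>
      by (intro mult_eq_residue_add_label[OF cop _ _ label]) auto
    then show "c * X - 180 * (g mod c) \<le> 180 * r div int p \<and> 180 * r div int p < c * Y - 180 * (g mod c)"
      using mem_ints_between_iff[OF prime \<open>p \<ge> 7\<close> \<open>c > 0\<close> _ r, of s "g mod c" X Y] s(1) by simp
  next
    assume *: "c * X - 180 * (g mod c) \<le> 180 * r div int p \<and> 180 * r div int p < c * Y - 180 * (g mod c)"
    define s where "s = (r + (g mod c) * int p) div c"
    have cs: "c * s = r + (g mod c) * int p" unfolding s_def using label by simp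
    then have "s \<in> ints_between p X Y"
      using mem_ints_between_iff[OF prime \<open>p \<ge> 7\<close> \<open>c > 0\<close> cs r, of X Y] * by simp
    moreover have "c * s mod int p = r" using cs r by simp
    ultimately show "r \<in> mult_residues p c X Y" unfolding mult_residues_def by force
  qed
qed

lemma inj_on_mult_mod_ints_between:
  assumes "coprime c (int p)" "0 \<le> X" "Y \<le> 180"
  shows "inj_on (\<lambda>s. c * s mod int p) (ints_between p X Y)"
proof (rule inj_onI)
  fix x y assume x: "x \<in> ints_between p X Y" and y: "y \<in> ints_between p X Y"
    and "c * x mod int p = c * y mod int p"
  then have "int p dvd c * (x - y)" by (simp add: mod_eq_dvd_iff right_diff_distrib)
  then have "int p dvd x - y"
    using assms(1) by (simp add: coprime_commute coprime_dvd_mult_right_iff)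
  then have "x mod int p = y mod int p" by (simp add: mod_eq_dvd_iff)
  then show "x = y"
    using ints_between_bounds[OF assms(2,3) x] ints_between_bounds[OF assms(2,3) y] by simp
qed

lemma mult_residues_subset:
  assumes "coprime c (int p)" "0 \<le> X" "Y \<le> 180"
  shows "mult_residues p c X Y \<subseteq> {1..<int p}"
proof
  fix r assume "r \<in> mult_residues p c X Y"
  then obtain s where s: "s \<in> ints_between p X Y" "r = c * s mod int p"
    by (auto simp: mult_residues_def)
  have "0 < s" "s < int p" using ints_between_bounds[OF assms(2,3) s(1)] by auto
  then have "\<not> int p dvd s" using zdvd_imp_le[of "int p" s] by auto
  then have "\<not> int p dvd c * s"
    using assms(1) by (simp add: coprime_commute coprime_dvd_mult_right_iff)
  moreover have "0 \<le> c * s mod int p" "c * s mod int p < int p"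
    using \<open>0 < s\<close> \<open>s < int p\<close> by simp_all
  ultimately show "r \<in> {1..<int p}"
    using s(2) by (auto simp: dvd_eq_mod_eq_0)
qed

lemma sum_ints_between_cong:
  assumes "coprime c (int p)" "0 \<le> X" "Y \<le> 180"
  shows "[(\<Sum>s\<in>ints_between p X Y. (c * s) ^ t)
    = (\<Sum>r\<in>{1..<int p}. if r \<in> mult_residues p c X Y then r ^ t else 0)] (mod int p)"
proof -
  have "[(\<Sum>s\<in>ints_between p X Y. (c * s) ^ t) = (\<Sum>s\<in>ints_between p X Y. (c * s mod int p) ^ t)] (mod int p)"
    by (intro cong_sum cong_pow) (simp add: cong_def)
  also have "(\<Sum>s\<in>ints_between p X Y. (c * s mod int p) ^ t) = (\<Sum>r\<in>mult_residues p c X Y. r ^ t)"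
    unfolding mult_residues_def
    by (subst sum.reindex[OF inj_on_mult_mod_ints_between[OF assms]]) (simp add: o_def)
  also have "\<dots> = (\<Sum>r\<in>{1..<int p}. if r \<in> mult_residues p c X Y then r ^ t else 0)"
    using mult_residues_subset[OF assms] by (simp add: sum.If_cases Int_absorb1)
  finally show ?thesis .
qed

lemma rhs_terms_bounds:
  "(\<sigma>, c, X, Y) \<in> set rhs_terms \<Longrightarrow> c > 0 \<and> c dvd 60 \<and> 0 \<le> X \<and> Y \<le> 180"
  unfolding rhs_terms_def by auto

definition term_weight :: "nat \<Rightarrow> int \<Rightarrow> int \<times> int \<times> int \<times> int \<Rightarrow> int" where
  "term_weight p r \<tau> = (case \<tau> of (\<sigma>, c, X, Y) \<Rightarrow> if r \<in> mult_residues p c X Y then \<sigma> else 0)"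

lemma sum_term_weight_eq:
  assumes prime: "prime p" and "p \<ge> 7" and r: "0 < r" "r < int p" and "60 dvd g * int p + r"
  shows "sum_list (map (term_weight p r) rhs_terms) = interval_weight (shifted_intervals g) (180 * r div int p)"
  unfolding interval_weight_shifted
proof (intro arg_cong[where f = sum_list] map_cong refl)
  fix \<tau> assume "\<tau> \<in> set rhs_terms"
  moreover obtain \<sigma> c X Y where \<tau>: "\<tau> = (\<sigma>, c, X, Y)" by (cases \<tau>)
  ultimately have "c > 0" "c dvd 60" "0 \<le> X" "Y \<le> 180" using rhs_terms_bounds by auto
  then show "term_weight p r \<tau> = (case \<tau> of (\<sigma>, c, X, Y) \<Rightarrow>
      if c * X - 180 * (g mod c) \<le> 180 * r div int p \<and> 180 * r div int p < c * Y - 180 * (g mod c)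
      then \<sigma> else 0)"
    unfolding \<tau> term_weight_def using mem_mult_residues_iff[OF prime \<open>p \<ge> 7\<close> _ _ _ _ r assms(5)] by simp
qed

lemma cong_sum_list:
  "(\<And>x. x \<in> set xs \<Longrightarrow> [f x = g x] (mod m)) \<Longrightarrow> [sum_list (map f xs) = sum_list (map g xs)] (mod m)"
  by (induction xs) (auto intro: cong_add)

lemma sum_list_sum_swap:
  "sum_list (map (\<lambda>x. \<Sum>r\<in>A. h x r) xs) = (\<Sum>r\<in>A. sum_list (map (\<lambda>x. h x r) xs))"
  by (induction xs) (auto simp: sum.distrib)

lemma rhs_int_cong:
  assumes prime: "prime p" and "p \<ge> 7"
  shows "[rhs_int p t = (\<Sum>r\<in>{1..<int p}. r ^ t * sum_list (map (term_weight p r) rhs_terms))] (mod int p)"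
proof -
  have "[rhs_int p t = sum_list (map (\<lambda>\<tau>. \<Sum>r\<in>{1..<int p}. r ^ t * term_weight p r \<tau>) rhs_terms)] (mod int p)"
    unfolding rhs_int_def
  proof (rule cong_sum_list)
    fix \<tau> assume "\<tau> \<in> set rhs_terms"
    moreover obtain \<sigma> c X Y where \<tau>: "\<tau> = (\<sigma>, c, X, Y)" by (cases \<tau>)
    ultimately have "c > 0" "c dvd 60" "0 \<le> X" "Y \<le> 180" using rhs_terms_bounds by auto
    moreover from this have "coprime c (int p)"
      using dvd_trans[of c 60 180] by (intro coprime_divisor_180[OF prime \<open>p \<ge> 7\<close>]) simp_all
    ultimately have "[\<sigma> * (\<Sum>s\<in>ints_between p X Y. (c * s) ^ t)
        = \<sigma> * (\<Sum>r\<in>{1..<int p}. if r \<in> mult_residues p c X Y then r ^ t else 0)] (mod int p)"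
      by (intro cong_mult cong_refl sum_ints_between_cong)
    moreover have "\<sigma> * (\<Sum>r\<in>{1..<int p}. if r \<in> mult_residues p c X Y then r ^ t else 0)
        = (\<Sum>r\<in>{1..<int p}. r ^ t * term_weight p r \<tau>)"
      unfolding sum_distrib_left \<tau> term_weight_def by (intro sum.cong refl) simp
    ultimately show "[(case \<tau> of (\<sigma>, c, X, Y) \<Rightarrow> \<sigma> * (\<Sum>s\<in>ints_between p X Y. (c * s) ^ t))
        = (\<Sum>r\<in>{1..<int p}. r ^ t * term_weight p r \<tau>)] (mod int p)"
      unfolding \<tau> by simp
  qed
  also have "sum_list (map (\<lambda>\<tau>. \<Sum>r\<in>{1..<int p}. r ^ t * term_weight p r \<tau>) rhs_terms)
      = (\<Sum>r\<in>{1..<int p}. r ^ t * sum_list (map (term_weight p r) rhs_terms))"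
    unfolding sum_list_sum_swap by (simp add: sum_list_const_mult)
  finally show ?thesis .
qed

lemma voronoi_sum_prime_eq:
  assumes p0: "p > 0" and a0: "a > 0" and ad: "a dvd 180"
  shows "int (voronoi_sum p a t) = (\<Sum>r\<in>{1..<int p}. r ^ t * ((180 * r div int p) div (180 div int a)))"
proof -
  have "int (voronoi_sum p a t) = (\<Sum>j<p. int j ^ t * (int j * int a div int p))"
    unfolding voronoi_sum_def by (simp add: zdiv_int)
  also have "\<dots> = (\<Sum>r\<in>{0..<int p}. r ^ t * (r * int a div int p))"
  proof -
    have "int ` {0..<p} = {0..<int p}" by (simp add: image_int_atLeastLessThan)
    moreover have "(\<Sum>j<p. int j ^ t * (int j * int a div int p)) = (\<Sum>r\<in>int ` {0..<p}. r ^ t * (r * int a div int p))"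
      by (subst sum.reindex) (auto simp: lessThan_atLeast0)
    ultimately show ?thesis by simp
  qed
  also have "\<dots> = (\<Sum>r\<in>{1..<int p}. r ^ t * (r * int a div int p))"
  proof -
    have "{0..<int p} = insert 0 {1..<int p}" using p0 by auto
    then show ?thesis by simp
  qed
  also have "\<dots> = (\<Sum>r\<in>{1..<int p}. r ^ t * ((180 * r div int p) div (180 div int a)))"
  proof (intro sum.cong refl)
    fix r :: int
    obtain d where d: "180 = int a * d" using ad by (metis dvd_def int_dvd_int_iff of_nat_numeral)
    have "0 < int a * d" using d by simp
    then have d0: "d > 0" using a0 by (simp add: zero_less_mult_iff)
    have "180 div int a = d" by (subst d) (use a0 in simp)
    moreover have "(180 * r div int p) div d = (r * int a) div int p"
    proof -
      have e: "180 * r = (r * int a) * d" by (subst d) (simp add: algebra_simps)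
      have "(180 * r div int p) div d = 180 * r div (int p * d)" using d0 by (simp add: zdiv_zmult2_eq)
      also have "\<dots> = ((r * int a) * d) div (int p * d)" by (simp only: e)
      also have "\<dots> = (r * int a) div int p" using d0 by simp
      finally show ?thesis .
    qed
    ultimately show "r ^ t * (r * int a div int p) = r ^ t * ((180 * r div int p) div (180 div int a))" by simp
  qed
  finally show ?thesis .
qed

lemma sum_odd_power_symmetric_cong_0:
  assumes prime: "prime p" and "p > 2" and t: "odd t"
    and f: "\<And>r. r \<in> {1..<int p} \<Longrightarrow> f (int p - r) = f r"
  shows "[(\<Sum>r\<in>{1..<int p}. r ^ t * f r) = 0] (mod int p)"
proof -
  define S where "S = (\<Sum>r\<in>{1..<int p}. r ^ t * f r)"
  have "S = (\<Sum>r\<in>{1..<int p}. (int p - r) ^ t * f (int p - r))"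
    unfolding S_def
    by (rule sum.reindex_bij_witness[of _ "\<lambda>r. int p - r" "\<lambda>r. int p - r"]) auto
  also have "\<dots> = (\<Sum>r\<in>{1..<int p}. (int p - r) ^ t * f r)"
    using f by (intro sum.cong refl) simp
  also have "[\<dots> = (\<Sum>r\<in>{1..<int p}. (- r) ^ t * f r)] (mod int p)"
    by (intro cong_sum cong_mult cong_pow cong_refl) (simp add: cong_def)
  also have "(\<Sum>r\<in>{1..<int p}. (- r) ^ t * f r) = - S"
    unfolding S_def using t by (simp add: sum_negf)
  finally have "[S = - S] (mod int p)" .
  then have "int p dvd 2 * S" by (simp add: cong_iff_dvd_diff)
  moreover have "prime (int p)" using prime by simp
  moreover have "\<not> int p dvd 2" using \<open>p > 2\<close> zdvd_imp_le[of "int p" 2] by linarith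
  ultimately have "int p dvd S" by (simp add: prime_dvd_mult_iff)
  then show ?thesis unfolding S_def by (simp add: cong_0_iff)
qed

lemma div_reflect:
  fixes L P r :: int
  assumes "P > 0" "\<not> P dvd L * r"
  shows "L * (P - r) div P = L - 1 - L * r div P"
proof -
  define \<rho> where "\<rho> = L * r mod P"
  have "0 < \<rho>" "\<rho> < P"
    using assms unfolding \<rho>_def by (auto simp: dvd_eq_mod_eq_0 order_le_neq_trans)
  then have "(P - \<rho>) div P = 0" by (intro div_pos_pos_trivial) auto
  moreover have "L * (P - r) = (P - \<rho>) + (L - 1 - L * r div P) * P"
    unfolding \<rho>_def by (simp add: algebra_simps minus_mod_eq_mult_div[symmetric])
  ultimately show ?thesis using assms(1) by simp
qed

lemma residue_labels:
  fixes P n :: int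
  assumes "coprime P n" "n > 0"
  obtains \<gamma> where "\<And>r. 0 \<le> \<gamma> r \<and> \<gamma> r < n" "\<And>r. n dvd \<gamma> r * P + r" "\<And>r. \<gamma> (P - r) = n - 1 - \<gamma> r"
proof -
  obtain P' where "[P * P' = 1] (mod n)" using cong_solve_coprime_int[OF assms(1)] by blast
  then have inv: "n dvd P * P' - 1" by (simp add: cong_iff_dvd_diff)
  define \<gamma> where "\<gamma> r = (- r * P') mod n" for r
  have label: "n dvd \<gamma> r + r * P'" for r
    unfolding \<gamma>_def by (metis diff_minus_eq_add mod_eq_dvd_iff mod_mod_trivial mult_minus_left)
  have "0 \<le> \<gamma> r \<and> \<gamma> r < n" for r unfolding \<gamma>_def using assms(2) by simp
  moreover have "n dvd \<gamma> r * P + r" for r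
  proof -
    have "\<gamma> r * P + r = (\<gamma> r + r * P') * P - r * (P * P' - 1)" by (simp add: algebra_simps)
    then show ?thesis using label inv by simp
  qed
  moreover have "\<gamma> (P - r) = n - 1 - \<gamma> r" for r
  proof -
    have eq: "- (P - r) * P' - (n - 1 - \<gamma> r) = (\<gamma> r + r * P') - (P * P' - 1) - n"
      by (simp add: algebra_simps)
    have "n dvd (\<gamma> r + r * P') - (P * P' - 1) - n"
      by (rule dvd_diff[OF dvd_diff[OF label inv] dvd_refl])
    then have "n dvd - (P - r) * P' - (n - 1 - \<gamma> r)" unfolding eq .
    then have "\<gamma> (P - r) = (n - 1 - \<gamma> r) mod n" unfolding \<gamma>_def by (simp add: mod_eq_dvd_iff)
    also have "\<dots> = n - 1 - \<gamma> r" using \<open>0 \<le> \<gamma> r \<and> \<gamma> r < n\<close> by simp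
    finally show ?thesis .
  qed
  ultimately show thesis using that by blast
qed

lemma rhs_int_cong_interval_weight:
  assumes prime: "prime p" and "p \<ge> 7" and label: "\<And>r. 60 dvd \<gamma> r * int p + r"
  shows "[rhs_int p t = (\<Sum>r\<in>{1..<int p}.
    r ^ t * interval_weight (shifted_intervals (\<gamma> r)) (180 * r div int p))] (mod int p)"
proof -
  have "[rhs_int p t = (\<Sum>r\<in>{1..<int p}. r ^ t * sum_list (map (term_weight p r) rhs_terms))] (mod int p)"
    by (rule rhs_int_cong[OF prime \<open>p \<ge> 7\<close>])
  also have "(\<Sum>r\<in>{1..<int p}. r ^ t * sum_list (map (term_weight p r) rhs_terms))
      = (\<Sum>r\<in>{1..<int p}. r ^ t * interval_weight (shifted_intervals (\<gamma> r)) (180 * r div int p))"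
    by (intro sum.cong refl) (simp add: sum_term_weight_eq[OF prime \<open>p \<ge> 7\<close> _ _ label])
  finally show ?thesis .
qed

lemma voronoi_sums_eq_voronoi_weight:
  assumes "p > 0"
  shows "int (voronoi_sum p 2 t) + int (voronoi_sum p 5 t) - int (voronoi_sum p 6 t)
    = (\<Sum>r\<in>{1..<int p}. r ^ t * voronoi_weight (180 * r div int p))"
  using assms
  by (simp add: voronoi_sum_prime_eq voronoi_weight_def algebra_simps
      sum.distrib[symmetric] sum_subtractf[symmetric])

lemma rhs_voronoi_cong:
  assumes prime: "prime p" and "p \<ge> 7" "odd t"
  shows "int p dvd 2 * rhs_int p t
    + int (voronoi_sum p 2 t) + int (voronoi_sum p 5 t) - int (voronoi_sum p 6 t)"
proof -
  have "coprime (int p) 60"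
    using coprime_divisor_180[OF prime \<open>p \<ge> 7\<close>, of 60] by (simp add: coprime_commute)
  then obtain \<gamma> where \<gamma>: "\<And>r. 0 \<le> \<gamma> r \<and> \<gamma> r < 60" "\<And>r. 60 dvd \<gamma> r * int p + r"
    "\<And>r. \<gamma> (int p - r) = 59 - \<gamma> r"
    using residue_labels[of "int p" 60] by auto
  define q where "q r = 180 * r div int p" for r
  have q: "0 \<le> q r \<and> q r < 180" "q (int p - r) = 179 - q r" if "r \<in> {1..<int p}" for r
    using that div_reflect[of "int p" 180 r] not_dvd_180_mult[OF prime \<open>p \<ge> 7\<close>, of r]
      less_mult_iff_div_less[of "int p" "180 * r" 180]
    unfolding q_def by (auto simp: pos_imp_zdiv_nonneg_iff)
  have "2 * rhs_int p t + int (voronoi_sum p 2 t) + int (voronoi_sum p 5 t) - int (voronoi_sum p 6 t)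
      = 2 * rhs_int p t + (\<Sum>r\<in>{1..<int p}. r ^ t * voronoi_weight (q r))"
    using voronoi_sums_eq_voronoi_weight[of p t] \<open>p \<ge> 7\<close> unfolding q_def by simp
  also have "[\<dots> = 2 * (\<Sum>r\<in>{1..<int p}. r ^ t * interval_weight (shifted_intervals (\<gamma> r)) (q r))
      + (\<Sum>r\<in>{1..<int p}. r ^ t * voronoi_weight (q r))] (mod int p)"
    using rhs_int_cong_interval_weight[OF prime \<open>p \<ge> 7\<close> \<gamma>(2)] unfolding q_def
    by (intro cong_add cong_mult cong_refl)
  also have "2 * (\<Sum>r\<in>{1..<int p}. r ^ t * interval_weight (shifted_intervals (\<gamma> r)) (q r))
      + (\<Sum>r\<in>{1..<int p}. r ^ t * voronoi_weight (q r))
      = (\<Sum>r\<in>{1..<int p}. r ^ t * total_weight (\<gamma> r) (q r))"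
    unfolding total_weight_def sum_distrib_left sum.distrib[symmetric] by (simp add: algebra_simps)
  also have "[\<dots> = 0] (mod int p)"
    using \<open>p \<ge> 7\<close> \<open>odd t\<close> \<gamma>(1) q total_weight_mirror
    by (intro sum_odd_power_symmetric_cong_0[OF prime]) (simp_all add: \<gamma>(3))
  finally show ?thesis by (simp add: cong_0_iff)
qed

theorem mainTheorem3:
  fixes p k :: nat
  assumes "prime p" and "p \<ge> 7" and "k \<ge> 1" and "\<not> (p - 1) dvd 2 * k"
  defines "t \<equiv> 2 * k - 1"
  shows "rat_cong (C_coef p k 2 5 6 * bernoulli (2 * k))
    ((3 ^ t + 6 ^ t) * S_sum p t (1/18) (11/180)
     + (3 ^ t + 6 ^ t - 10 ^ t) * S_sum p t (11/180) (1/15)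
     - (6 ^ t - 10 ^ t + 12 ^ t) * S_sum p t (2/15) (5/36)
     + (6 ^ t + 12 ^ t) * S_sum p t (7/36) (1/5)
     - 10 ^ t * S_sum p t (47/180) (4/15)
     - (2 ^ t + 6 ^ t + 12 ^ t) * S_sum p t (3/10) (11/36)
     + 10 ^ t * S_sum p t (1/3) (61/180)
     + (6 ^ t + 12 ^ t) * S_sum p t (13/36) (11/30)
     - 10 ^ t * S_sum p t (83/180) (7/15)) p"
proof -
  note prime = \<open>prime p\<close>
  define b where "b = bernoulli (2 * k) / of_nat (2 * k)"
  define V where "V a = (of_nat a powi (int p - int (2 * k)) - of_nat a) * b + of_nat (voronoi_sum p a t)"
    for a :: nat
  have "pval_ge p 1 (V a)" if "a \<in> {2, 5, 6}" for a
  proof -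
    have "\<not> p dvd a" using that \<open>p \<ge> 7\<close> by (auto dest: dvd_imp_le)
    then have "coprime a p" using prime_imp_coprime[OF prime] by (simp add: coprime_commute)
    moreover have "a > 0" using that by auto
    ultimately show ?thesis
      using voronoi_congruence_mod_p[OF prime _ _ _ _ _ assms(4), of a] assms(2,3)
      unfolding V_def b_def t_def by simp
  qed
  moreover have "pval_ge p 1 (of_int (2 * rhs_int p t
      + int (voronoi_sum p 2 t) + int (voronoi_sum p 5 t) - int (voronoi_sum p 6 t)))"
    using rhs_voronoi_cong[OF prime \<open>p \<ge> 7\<close>] assms(3) unfolding t_def
    by (intro pval_ge_of_int[OF prime]) simp
  ultimately have pval: "pval_ge p 1 ((V 2 + V 5 - V 6 - of_int (2 * rhs_int p t
      + int (voronoi_sum p 2 t) + int (voronoi_sum p 5 t) - int (voronoi_sum p 6 t))) / of_int 2)"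
    using \<open>p \<ge> 7\<close> zdvd_imp_le[of "int p" 2]
    by (intro pval_ge_divide_int[OF prime] pval_ge_diff[OF prime] pval_ge_add[OF prime]) auto
  have "(V 2 + V 5 - V 6 - of_int (2 * rhs_int p t
      + int (voronoi_sum p 2 t) + int (voronoi_sum p 5 t) - int (voronoi_sum p 6 t))) / of_int 2
      = C_coef p k 2 5 6 * bernoulli (2 * k) - of_int (rhs_int p t)"
    using \<open>k \<ge> 1\<close> unfolding V_def b_def C_coef_def by (simp add: field_simps)
  with pval show ?thesis
    unfolding rhs_eq_rhs_int by (intro rat_cong_if_pval_ge_1[OF prime]) (simp only:)
qed

end
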